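(* Let $k\ge 2$ and $\Delta\ge 2$ be integers, let $f(z)=\frac{(1-z^{k-1})^{\Delta-1}}{1+(1-z^{k-1})^{\Delta-1}}$ on $[0,1]$, and let $x$ be the unique point of $[0,1]$ with $f(x)=x$. If $|f'(x)|<1$, the independent set model has uniqueness on $\mathbb{T}_{k,\Delta}$. If $|f'(x)|>1$, the independent set model has non-uniqueness on $\mathbb{T}_{k,\Delta}$.
   Context: $\mathbb{T}_{k,\Delta}$ is the infinite $(\Delta-1)$-ary $k$-uniform hypertree with root $\rho$: recursively, each vertex has $\Delta-1$ descending hyperedges, each consisting of that vertex together with $k-1$ new vertices. For $n\ge 0$, $\mathbb{T}(n)$ is the sub-hypergraph induced by vertices at distance at most $n$ from $\rho$, and $L_n$ is the set of vertices at distance exactly $n$ from $\rho$. An independent set (vertex subset containing no hyperedge) is identified with $\sigma:V(\mathbb{T}(n))\to\{0,1\}$, $\sigma(v)=1$ iff $v$ is in the set; $\mu_n$ is the uniform distribution on independent sets of $\mathbb{T}(n)$. The model has uniqueness on $\mathbb{T}_{k,\Delta}$ iff $\limsup_{n\to\infty}\max_{\eta,\eta':L_n\to\{0,1\}}|\mu_n(\sigma_\rho=1\mid\sigma_{L_n}=\eta)-\mu_n(\sigma_\rho=1\mid\sigma_{L_n}=\eta')|=0$, and non-uniqueness otherwise. *)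

theory Defs
  imports "HOL-Analysis.Analysis"
begin

text \<open>Vertices of T(n) for the (Delta-1)-ary k-uniform hypertree: a vertex is the
list of choices (j, i) from the root, j < Delta-1 the descending hyperedge,
i < k-1 the position among the new vertices of that hyperedge.\<close>

definition hverts :: "nat \<Rightarrow> nat \<Rightarrow> nat \<Rightarrow> (nat \<times> nat) list set" where
  "hverts k D n = {v. length v \<le> n \<and> (\<forall>p\<in>set v. fst p < D - 1 \<and> snd p < k - 1)}"

definition hedges :: "nat \<Rightarrow> nat \<Rightarrow> nat \<Rightarrow> (nat \<times> nat) list set set" where
  "hedges k D n = {insert v {v @ [(j, i)] | i. i < k - 1} | v j.
      v \<in> hverts k D n \<and> length v < n \<and> j < D - 1}"

definition level :: "nat \<Rightarrow> nat \<Rightarrow> nat \<Rightarrow> (nat \<times> nat) list set" where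
  "level k D n = {v \<in> hverts k D n. length v = n}"

text \<open>Independent sets of T(n) (identified with sigma via sigma(v)=1 iff v in S).\<close>
definition indep_sets :: "nat \<Rightarrow> nat \<Rightarrow> nat \<Rightarrow> (nat \<times> nat) list set set" where
  "indep_sets k D n = {S. S \<subseteq> hverts k D n \<and> (\<forall>e\<in>hedges k D n. \<not> e \<subseteq> S)}"

text \<open>mu_n(sigma_root = 1 | sigma_{L_n} = eta) for the uniform distribution mu_n,
with the boundary condition eta given as the subset of L_n where it equals 1.\<close>
definition cond_root_prob :: "nat \<Rightarrow> nat \<Rightarrow> nat \<Rightarrow> (nat \<times> nat) list set \<Rightarrow> real" where
  "cond_root_prob k D n \<eta> =
     real (card {S \<in> indep_sets k D n. [] \<in> S \<and> S \<inter> level k D n = \<eta>})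
     / real (card {S \<in> indep_sets k D n. S \<inter> level k D n = \<eta>})"

definition boundary_gap :: "nat \<Rightarrow> nat \<Rightarrow> nat \<Rightarrow> real" where
  "boundary_gap k D n = Max {\<bar>cond_root_prob k D n \<eta> - cond_root_prob k D n \<eta>'\<bar> | \<eta> \<eta>'.
      \<eta> \<subseteq> level k D n \<and> \<eta>' \<subseteq> level k D n}"

definition has_uniqueness :: "nat \<Rightarrow> nat \<Rightarrow> bool" where
  "has_uniqueness k D \<longleftrightarrow> limsup (\<lambda>n. ereal (boundary_gap k D n)) = 0"

end

theory Submission
  imports Defs "HOL-Probability.Characteristic_Functions"
begin

text \<open>Conditioning on the boundary, the subtrees below the children of the root are independent,
  so the probability that the root is occupied follows the recursion $p \mapsto f(p)$ from the
  children, with $f$ antitone. Hence every boundary condition is sandwiched between the all-empty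
  and the all-occupied one, whose root probabilities are $f^n(0)$ and $f^n(1) = f^{n-1}(0)$, and
  uniqueness means $f^n(0) \to x$. The even iterates $f^{2n}(0)$ increase to a fixed point $L \le x$
  of $f \circ f$; uniqueness holds iff $L = x$.

  If $|f'(x)| > 1$, then $f(f(y)) < y$ just below $x$, so the increasing even iterates cannot
  approach $x$. If $|f'(x)| < 1$ but $L < x$, then $L < x < f(L)$ is a 2-cycle. In logit coordinates
  $f$ becomes a concave map $F$ with $-F'$ increasing and log-concave, and such a map admits no
  2-cycle around a fixed point where $|F'| < 1$; since $f'(x) = F'(\mathrm{logit}\, x)$ at the fixed
  point, this contradicts $|f'(x)| < 1$.\<close>

section \<open>Splitting independent sets at the root\<close>

definition subtree :: "nat \<times> nat \<Rightarrow> (nat \<times> nat) list set \<Rightarrow> (nat \<times> nat) list set" where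
  "subtree c S = {w. c # w \<in> S}"

definition graft ::
  "bool \<Rightarrow> (nat \<Rightarrow> nat \<Rightarrow> (nat \<times> nat) list set) \<Rightarrow> nat \<Rightarrow> nat \<Rightarrow> (nat \<times> nat) list set" where
  "graft b G d m =
    (if b then {[]} else {}) \<union> (\<Union>j<d. \<Union>i<m. (#) (j, i) ` G j i)"

definition indep_with_boundary ::
  "nat \<Rightarrow> nat \<Rightarrow> nat \<Rightarrow> (nat \<times> nat) list set \<Rightarrow> (nat \<times> nat) list set set" where
  "indep_with_boundary k D n \<eta> = {S \<in> indep_sets k D n. S \<inter> level k D n = \<eta>}"

lemma hverts_Nil [simp]: "[] \<in> hverts k D n"
  by (simp add: hverts_def)

lemma Cons_in_hverts_Suc [simp]:
  "c # w \<in> hverts k D (Suc n) \<longleftrightarrow> fst c < D - 1 \<and> snd c < k - 1 \<and> w \<in> hverts k D n"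
  by (auto simp: hverts_def)

lemma hverts_0: "hverts k D 0 = {[]}"
  by (auto simp: hverts_def)

lemma finite_hverts: "finite (hverts k D n)"
proof (rule finite_subset)
  show "hverts k D n \<subseteq> {xs. set xs \<subseteq> {..<D - 1} \<times> {..<k - 1} \<and> length xs \<le> n}"
    by (auto simp: hverts_def)
qed (auto intro: finite_lists_length_le)

lemma level_0: "level k D 0 = {[]}"
  by (auto simp: level_def hverts_def)

lemma Nil_notin_level_Suc [simp]: "[] \<notin> level k D (Suc n)"
  by (simp add: level_def)

lemma Cons_in_level_Suc [simp]:
  "c # w \<in> level k D (Suc n) \<longleftrightarrow> fst c < D - 1 \<and> snd c < k - 1 \<and> w \<in> level k D n"
  by (auto simp: level_def)

lemma level_subset_hverts: "level k D n \<subseteq> hverts k D n"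
  by (auto simp: level_def)

lemma finite_level: "finite (level k D n)"
  using finite_subset[OF level_subset_hverts finite_hverts] .

lemma hedges_0: "hedges k D 0 = {}"
  by (auto simp: hedges_def)

lemma root_hedge_in_hedges:
  assumes "j < D - 1"
  shows "insert [] {[(j, i)] | i. i < k - 1} \<in> hedges k D (Suc n)"
  unfolding hedges_def using assms
  by (rule_tac CollectI, rule_tac x="[]" in exI, rule_tac x=j in exI) auto

lemma Cons_image_in_hedges_Suc:
  assumes "e \<in> hedges k D n" "j < D - 1" "i < k - 1"
  shows "(#) (j, i) ` e \<in> hedges k D (Suc n)"
proof -
  from assms(1) obtain v j' where e: "e = insert v {v @ [(j', i')] | i'. i' < k - 1}"
    and v: "v \<in> hverts k D n" "length v < n" "j' < D - 1"
    unfolding hedges_def by blast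
  have "(#) (j, i) ` e = insert ((j, i) # v) {((j, i) # v) @ [(j', i')] | i'. i' < k - 1}"
    unfolding e by auto
  moreover have "(j, i) # v \<in> hverts k D (Suc n)"
    using v assms by simp
  ultimately show ?thesis
    unfolding hedges_def using v by fastforce
qed

lemma hedges_SucE:
  assumes "e \<in> hedges k D (Suc n)"
  obtains j where "j < D - 1" "e = insert [] {[(j, i)] | i. i < k - 1}"
  | c e' where "fst c < D - 1" "snd c < k - 1" "e' \<in> hedges k D n" "e = (#) c ` e'"
proof -
  from assms obtain v j where e: "e = insert v {v @ [(j, i)] | i. i < k - 1}"
    and v: "v \<in> hverts k D (Suc n)" "length v < Suc n" "j < D - 1"
    unfolding hedges_def by blast
  show ?thesis
  proof (cases v)
    case Nil
    then show ?thesis using that(1)[of j] e v by auto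
  next
    case (Cons c w)
    let ?e' = "insert w {w @ [(j, i)] | i. i < k - 1}"
    have "?e' \<in> hedges k D n"
      unfolding hedges_def using v Cons by auto
    moreover have "e = (#) c ` ?e'"
      unfolding e Cons by auto
    ultimately show ?thesis using that(2)[of c ?e'] v Cons by auto
  qed
qed

lemma Nil_in_graft [simp]: "[] \<in> graft b G d m \<longleftrightarrow> b"
  by (auto simp: graft_def)

lemma Cons_in_graft [simp]:
  "c # u \<in> graft b G d m \<longleftrightarrow> fst c < d \<and> snd c < m \<and> u \<in> G (fst c) (snd c)"
  by (cases c) (auto simp: graft_def)

lemma subtree_graft [simp]: "j < d \<Longrightarrow> i < m \<Longrightarrow> subtree (j, i) (graft b G d m) = G j i"
  by (auto simp: subtree_def)

lemma graft_cong:
  "(\<And>j i. j < d \<Longrightarrow> i < m \<Longrightarrow> G j i = G' j i) \<Longrightarrow> graft b G d m = graft b G' d m"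
  by (auto simp: graft_def)

lemma subtree_empty [simp]: "subtree c {} = {}"
  by (simp add: subtree_def)

lemma subtree_level_Suc: "j < D - 1 \<Longrightarrow> i < k - 1 \<Longrightarrow> subtree (j, i) (level k D (Suc n)) = level k D n"
  by (auto simp: subtree_def)

lemma subtree_subset_level: "\<eta> \<subseteq> level k D (Suc n) \<Longrightarrow> subtree c \<eta> \<subseteq> level k D n"
  by (auto simp: subtree_def)

lemma subtree_mono: "S \<subseteq> T \<Longrightarrow> subtree c S \<subseteq> subtree c T"
  by (auto simp: subtree_def)

lemma subtree_hverts_Suc: "subtree c (hverts k D (Suc n)) \<subseteq> hverts k D n"
  by (auto simp: subtree_def)

lemma graft_subtrees:
  assumes "S \<subseteq> hverts k D (Suc n)"
  shows "graft ([] \<in> S) (\<lambda>j i. subtree (j, i) S) (D - 1) (k - 1) = S"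
proof (rule set_eqI)
  fix v
  show "v \<in> graft ([] \<in> S) (\<lambda>j i. subtree (j, i) S) (D - 1) (k - 1) \<longleftrightarrow> v \<in> S"
    using assms by (cases v) (auto simp: subtree_def)
qed

lemma graft_subset_hverts:
  assumes "\<And>j i. j < D - 1 \<Longrightarrow> i < k - 1 \<Longrightarrow> G j i \<subseteq> hverts k D n"
  shows "graft b G (D - 1) (k - 1) \<subseteq> hverts k D (Suc n)"
proof
  fix v assume "v \<in> graft b G (D - 1) (k - 1)"
  then show "v \<in> hverts k D (Suc n)"
    using assms by (cases v) auto
qed

lemma graft_in_indep_setsD:
  assumes G: "\<And>j i. j < D - 1 \<Longrightarrow> i < k - 1 \<Longrightarrow> G j i \<subseteq> hverts k D n"
    and S: "graft b G (D - 1) (k - 1) \<in> indep_sets k D (Suc n)"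
  shows "\<forall>j<D - 1. \<forall>i<k - 1. G j i \<in> indep_sets k D n"
    and "b \<longrightarrow> (\<forall>j<D - 1. \<exists>i<k - 1. [] \<notin> G j i)"
proof (intro allI impI)
  let ?S = "graft b G (D - 1) (k - 1)"
  fix j i assume ji: "j < D - 1" "i < k - 1"
  have "\<not> e \<subseteq> G j i" if "e \<in> hedges k D n" for e
  proof
    assume "e \<subseteq> G j i"
    then have "(#) (j, i) ` e \<subseteq> ?S" using ji by auto
    then show False
      using S Cons_image_in_hedges_Suc[OF that ji] unfolding indep_sets_def by blast
  qed
  then show "G j i \<in> indep_sets k D n"
    using G ji by (simp add: indep_sets_def)
next
  let ?S = "graft b G (D - 1) (k - 1)"
  show "b \<longrightarrow> (\<forall>j<D - 1. \<exists>i<k - 1. [] \<notin> G j i)"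
  proof (intro impI allI, rule ccontr)
    fix j assume b and j: "j < D - 1" and "\<not> (\<exists>i<k - 1. [] \<notin> G j i)"
    then have "insert [] {[(j, i)] | i. i < k - 1} \<subseteq> ?S" by auto
    then show False
      using S root_hedge_in_hedges[OF j] unfolding indep_sets_def by blast
  qed
qed

lemma graft_in_indep_setsI:
  assumes G: "\<And>j i. j < D - 1 \<Longrightarrow> i < k - 1 \<Longrightarrow> G j i \<in> indep_sets k D n"
    and root: "b \<longrightarrow> (\<forall>j<D - 1. \<exists>i<k - 1. [] \<notin> G j i)"
  shows "graft b G (D - 1) (k - 1) \<in> indep_sets k D (Suc n)"
proof -
  let ?S = "graft b G (D - 1) (k - 1)"
  have "\<not> e \<subseteq> ?S" if e: "e \<in> hedges k D (Suc n)" for e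
  proof (cases rule: hedges_SucE[OF e])
    case (1 j)
    show ?thesis
    proof
      assume sub: "e \<subseteq> ?S"
      then have b using 1 by auto
      then obtain i where "i < k - 1" "[] \<notin> G j i" using root 1 by blast
      moreover have "[(j, i)] \<in> e" using 1 \<open>i < k - 1\<close> by auto
      ultimately show False using sub by auto
    qed
  next
    case (2 c e')
    then have "\<not> e' \<subseteq> G (fst c) (snd c)"
      using G[of "fst c" "snd c"] unfolding indep_sets_def by blast
    then show ?thesis using 2 by auto
  qed
  moreover have "?S \<subseteq> hverts k D (Suc n)"
    using G by (intro graft_subset_hverts) (simp add: indep_sets_def)
  ultimately show ?thesis
    by (simp add: indep_sets_def)
qed

lemma graft_in_indep_sets_iff:
  assumes "\<And>j i. j < D - 1 \<Longrightarrow> i < k - 1 \<Longrightarrow> G j i \<subseteq> hverts k D n"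
  shows "graft b G (D - 1) (k - 1) \<in> indep_sets k D (Suc n) \<longleftrightarrow>
    (\<forall>j<D - 1. \<forall>i<k - 1. G j i \<in> indep_sets k D n) \<and> (b \<longrightarrow> (\<forall>j<D - 1. \<exists>i<k - 1. [] \<notin> G j i))"
  using graft_in_indep_setsD[where G = G and b = b, OF assms] graft_in_indep_setsI[of D k G n b]
  by blast

lemma graft_Int_level_iff:
  assumes \<eta>: "\<eta> \<subseteq> level k D (Suc n)"
  shows "graft b G (D - 1) (k - 1) \<inter> level k D (Suc n) = \<eta> \<longleftrightarrow>
     (\<forall>j<D - 1. \<forall>i<k - 1. G j i \<inter> level k D n = subtree (j, i) \<eta>)" (is "?S \<inter> _ = _ \<longleftrightarrow> ?R")
proof
  assume L: "?S \<inter> level k D (Suc n) = \<eta>"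
  show ?R
    by (intro allI impI set_eqI) (auto simp: subtree_def simp flip: L)
next
  assume R: ?R
  show "?S \<inter> level k D (Suc n) = \<eta>"
  proof (rule set_eqI)
    fix v
    show "v \<in> ?S \<inter> level k D (Suc n) \<longleftrightarrow> v \<in> \<eta>"
    proof (cases v)
      case Nil
      then show ?thesis using \<eta> by auto
    next
      case (Cons c w)
      show ?thesis
      proof (cases "fst c < D - 1 \<and> snd c < k - 1")
        case True
        then have "w \<in> G (fst c) (snd c) \<inter> level k D n \<longleftrightarrow> w \<in> subtree (fst c, snd c) \<eta>"
          using R by blast
        then show ?thesis using Cons True by (auto simp: subtree_def)
      next
        case False
        then show ?thesis using Cons \<eta> by auto
      qed
    qed
  qed
qed

lemma finite_indep_sets: "finite (indep_sets k D n)"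
proof (rule finite_subset)
  show "indep_sets k D n \<subseteq> Pow (hverts k D n)"
    by (auto simp: indep_sets_def)
qed (simp add: finite_hverts)

lemma finite_indep_with_boundary: "finite (indep_with_boundary k D n \<eta>)"
  unfolding indep_with_boundary_def using finite_indep_sets by simp

lemma boundary_in_indep_with_boundary:
  assumes "\<eta> \<subseteq> level k D n"
  shows "\<eta> \<in> indep_with_boundary k D n \<eta>"
proof -
  have "\<not> e \<subseteq> \<eta>" if "e \<in> hedges k D n" for e
  proof
    assume sub: "e \<subseteq> \<eta>"
    from that obtain v j where "e = insert v {v @ [(j, i)] | i. i < k - 1}" and "length v < n"
      unfolding hedges_def by blast
    then show False
      using sub assms by (auto simp: level_def)
  qed
  then show ?thesis
    using assms level_subset_hverts by (fastforce simp: indep_with_boundary_def indep_sets_def)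
qed

lemma card_indep_with_boundary_pos: "\<eta> \<subseteq> level k D n \<Longrightarrow> card (indep_with_boundary k D n \<eta>) > 0"
  using boundary_in_indep_with_boundary finite_indep_with_boundary by (metis card_gt_0_iff empty_iff)

lemma in_indep_with_boundary_Suc_iff:
  assumes \<eta>: "\<eta> \<subseteq> level k D (Suc n)" and S: "S \<subseteq> hverts k D (Suc n)"
  shows "S \<in> indep_with_boundary k D (Suc n) \<eta> \<longleftrightarrow>
    (\<forall>j<D - 1. \<forall>i<k - 1. subtree (j, i) S \<in> indep_with_boundary k D n (subtree (j, i) \<eta>)) \<and>
    ([] \<in> S \<longrightarrow> (\<forall>j<D - 1. \<exists>i<k - 1. [] \<notin> subtree (j, i) S))"
proof -
  let ?G = "\<lambda>j i. subtree (j, i) S"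
  have G: "?G j i \<subseteq> hverts k D n" for j i
    using subtree_mono[OF S] subtree_hverts_Suc by blast
  have S_eq: "graft ([] \<in> S) ?G (D - 1) (k - 1) = S"
    by (rule graft_subtrees[OF S])
  have "S \<in> indep_sets k D (Suc n) \<longleftrightarrow>
      (\<forall>j<D - 1. \<forall>i<k - 1. ?G j i \<in> indep_sets k D n) \<and>
      ([] \<in> S \<longrightarrow> (\<forall>j<D - 1. \<exists>i<k - 1. [] \<notin> ?G j i))"
    using graft_in_indep_sets_iff[where G = ?G and b = "[] \<in> S", OF G] unfolding S_eq .
  moreover have "S \<inter> level k D (Suc n) = \<eta> \<longleftrightarrow>
      (\<forall>j<D - 1. \<forall>i<k - 1. ?G j i \<inter> level k D n = subtree (j, i) \<eta>)"
    using graft_Int_level_iff[OF \<eta>, of "[] \<in> S" ?G] unfolding S_eq .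
  ultimately show ?thesis
    unfolding indep_with_boundary_def by blast
qed

lemma indep_with_boundary_subset_hverts: "S \<in> indep_with_boundary k D n \<eta> \<Longrightarrow> S \<subseteq> hverts k D n"
  by (simp add: indep_with_boundary_def indep_sets_def)

lemma graft_in_indep_with_boundary_Suc:
  assumes \<eta>: "\<eta> \<subseteq> level k D (Suc n)"
    and G: "\<And>j i. j < D - 1 \<Longrightarrow> i < k - 1 \<Longrightarrow> G j i \<in> indep_with_boundary k D n (subtree (j, i) \<eta>)"
    and root: "b \<longrightarrow> (\<forall>j<D - 1. \<exists>i<k - 1. [] \<notin> G j i)"
  shows "graft b G (D - 1) (k - 1) \<in> indep_with_boundary k D (Suc n) \<eta>"
proof -
  have "graft b G (D - 1) (k - 1) \<subseteq> hverts k D (Suc n)"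
    using G by (intro graft_subset_hverts) (auto dest: indep_with_boundary_subset_hverts)
  moreover have "\<exists>i<k - 1. [] \<notin> subtree (j, i) (graft b G (D - 1) (k - 1))"
    if b: b and j: "j < D - 1" for j
  proof -
    obtain i where "i < k - 1" "[] \<notin> G j i"
      using root b j by blast
    then show ?thesis
      using j by auto
  qed
  ultimately show ?thesis
    using G by (subst in_indep_with_boundary_Suc_iff[OF \<eta>]) auto
qed

lemma restrict_subtrees_graft:
  assumes "G \<in> (\<Pi>\<^sub>E j\<in>{..<d}. A j)" and "\<And>j. j < d \<Longrightarrow> A j \<subseteq> (\<Pi>\<^sub>E i\<in>{..<m}. B j i)"
  shows "(\<lambda>j\<in>{..<d}. \<lambda>i\<in>{..<m}. subtree (j, i) (graft b G d m)) = G"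
proof -
  have "(\<lambda>j\<in>{..<d}. \<lambda>i\<in>{..<m}. subtree (j, i) (graft b G d m)) = (\<lambda>j\<in>{..<d}. \<lambda>i\<in>{..<m}. G j i)"
    by (intro restrict_ext) simp
  also have "\<dots> = (\<lambda>j\<in>{..<d}. G j)"
  proof (rule restrict_ext)
    fix j assume "j \<in> {..<d}"
    then have "G j \<in> (\<Pi>\<^sub>E i\<in>{..<m}. B j i)"
      using assms by blast
    then show "(\<lambda>i\<in>{..<m}. G j i) = G j"
      by (rule PiE_restrict)
  qed
  also have "\<dots> = G"
    using assms(1) by (rule PiE_restrict)
  finally show ?thesis .
qed

lemma bij_betw_subtrees:
  assumes \<eta>: "\<eta> \<subseteq> level k D (Suc n)"
  shows "bij_betw (\<lambda>S. \<lambda>j\<in>{..<D - 1}. \<lambda>i\<in>{..<k - 1}. subtree (j, i) S)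
     {S \<in> indep_with_boundary k D (Suc n) \<eta>. ([] \<in> S) = b}
     (\<Pi>\<^sub>E j\<in>{..<D - 1}. {g \<in> \<Pi>\<^sub>E i\<in>{..<k - 1}. indep_with_boundary k D n (subtree (j, i) \<eta>).
        b \<longrightarrow> (\<exists>i<k - 1. [] \<notin> g i)})"
proof (rule bij_betw_byWitness[where f' = "\<lambda>G. graft b G (D - 1) (k - 1)"])
  let ?f = "\<lambda>S. \<lambda>j\<in>{..<D - 1}. \<lambda>i\<in>{..<k - 1}. subtree (j, i) S"
  let ?A = "{S \<in> indep_with_boundary k D (Suc n) \<eta>. ([] \<in> S) = b}"
  let ?B = "\<Pi>\<^sub>E j\<in>{..<D - 1}. {g \<in> \<Pi>\<^sub>E i\<in>{..<k - 1}. indep_with_boundary k D n (subtree (j, i) \<eta>).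
        b \<longrightarrow> (\<exists>i<k - 1. [] \<notin> g i)}"
  show "\<forall>S\<in>?A. graft b (?f S) (D - 1) (k - 1) = S"
  proof
    fix S assume S: "S \<in> ?A"
    have "graft b (?f S) (D - 1) (k - 1) = graft b (\<lambda>j i. subtree (j, i) S) (D - 1) (k - 1)"
      by (rule graft_cong) simp
    also have "\<dots> = graft ([] \<in> S) (\<lambda>j i. subtree (j, i) S) (D - 1) (k - 1)"
      using S by simp
    also have "\<dots> = S"
      using S by (intro graft_subtrees indep_with_boundary_subset_hverts) blast
    finally show "graft b (?f S) (D - 1) (k - 1) = S" .
  qed
  show "\<forall>G\<in>?B. ?f (graft b G (D - 1) (k - 1)) = G"
    by (intro ballI restrict_subtrees_graft) auto
  show "?f ` ?A \<subseteq> ?B"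
  proof (rule image_subsetI)
    fix S assume "S \<in> ?A"
    then have S: "S \<in> indep_with_boundary k D (Suc n) \<eta>" and b: "b = ([] \<in> S)"
      by auto
    show "?f S \<in> ?B"
      using S in_indep_with_boundary_Suc_iff[OF \<eta> indep_with_boundary_subset_hverts[OF S]]
      unfolding b restrict_PiE_iff by auto
  qed
  show "(\<lambda>G. graft b G (D - 1) (k - 1)) ` ?B \<subseteq> ?A"
  proof (rule image_subsetI)
    fix G assume G: "G \<in> ?B"
    have Gj: "G j \<in> (\<Pi>\<^sub>E i\<in>{..<k - 1}. indep_with_boundary k D n (subtree (j, i) \<eta>))"
      and "b \<longrightarrow> (\<exists>i<k - 1. [] \<notin> G j i)" if "j < D - 1" for j
      using PiE_mem[OF G, of j] that by simp_all
    moreover have "G j i \<in> indep_with_boundary k D n (subtree (j, i) \<eta>)"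
      if "j < D - 1" "i < k - 1" for j i
      using PiE_mem[OF Gj, of j i] that by simp
    ultimately have "graft b G (D - 1) (k - 1) \<in> indep_with_boundary k D (Suc n) \<eta>"
      by (intro graft_in_indep_with_boundary_Suc[OF \<eta>]) blast+
    then show "graft b G (D - 1) (k - 1) \<in> ?A" by simp
  qed
qed

lemma card_root_notin_indep_with_boundary_Suc:
  assumes "\<eta> \<subseteq> level k D (Suc n)"
  shows "card {S \<in> indep_with_boundary k D (Suc n) \<eta>. [] \<notin> S} =
    (\<Prod>j<D - 1. \<Prod>i<k - 1. card (indep_with_boundary k D n (subtree (j, i) \<eta>)))"
  using bij_betw_same_card[OF bij_betw_subtrees[OF assms, of False]] by (simp add: card_PiE)

lemma card_root_in_indep_with_boundary_Suc:
  assumes "\<eta> \<subseteq> level k D (Suc n)"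
  shows "card {S \<in> indep_with_boundary k D (Suc n) \<eta>. [] \<in> S} =
    (\<Prod>j<D - 1. (\<Prod>i<k - 1. card (indep_with_boundary k D n (subtree (j, i) \<eta>)))
       - (\<Prod>i<k - 1. card {S \<in> indep_with_boundary k D n (subtree (j, i) \<eta>). [] \<in> S}))"
proof -
  have "card {g \<in> \<Pi>\<^sub>E i\<in>{..<k - 1}. A i. \<exists>i<k - 1. [] \<notin> g i} =
      (\<Prod>i<k - 1. card (A i)) - (\<Prod>i<k - 1. card {S \<in> A i. [] \<in> S})"
    if "\<And>i. finite (A i)" for A :: "nat \<Rightarrow> (nat \<times> nat) list set set"
  proof -
    have "{g \<in> \<Pi>\<^sub>E i\<in>{..<k - 1}. A i. \<exists>i<k - 1. [] \<notin> g i} =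
        (\<Pi>\<^sub>E i\<in>{..<k - 1}. A i) - (\<Pi>\<^sub>E i\<in>{..<k - 1}. {S \<in> A i. [] \<in> S})"
      by (auto simp: PiE_iff extensional_def)
    moreover have "(\<Pi>\<^sub>E i\<in>{..<k - 1}. {S \<in> A i. [] \<in> S}) \<subseteq> (\<Pi>\<^sub>E i\<in>{..<k - 1}. A i)"
      by (rule PiE_mono) blast
    ultimately show ?thesis
      using that by (simp add: card_Diff_subset finite_PiE card_PiE)
  qed
  then show ?thesis
    using bij_betw_same_card[OF bij_betw_subtrees[OF assms, of True]]
    by (simp add: card_PiE finite_indep_with_boundary)
qed

lemma cond_root_prob_eq_card_ratio:
  "cond_root_prob k D n \<eta> =
    real (card {S \<in> indep_with_boundary k D n \<eta>. [] \<in> S}) / real (card (indep_with_boundary k D n \<eta>))"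
proof -
  have "{S \<in> indep_sets k D n. [] \<in> S \<and> S \<inter> level k D n = \<eta>} =
      {S \<in> indep_with_boundary k D n \<eta>. [] \<in> S}"
    by (auto simp: indep_with_boundary_def)
  then show ?thesis
    by (simp add: cond_root_prob_def indep_with_boundary_def)
qed

lemma prod_diff_prod_eq:
  fixes M N :: "'a \<Rightarrow> 'b::field"
  assumes "finite I" and "\<And>i. i \<in> I \<Longrightarrow> N i \<noteq> 0"
  shows "(\<Prod>i\<in>I. N i) - (\<Prod>i\<in>I. M i) = (\<Prod>i\<in>I. N i) * (1 - (\<Prod>i\<in>I. M i / N i))"
proof -
  have "(\<Prod>i\<in>I. N i) \<noteq> 0"
    using assms by (simp add: prod_zero_iff)
  then show ?thesis
    by (simp add: prod_dividef right_diff_distrib)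
qed

text \<open>$R$ is the ratio of the number of configurations with the root occupied to those with the root
  empty: in the latter the subtrees are arbitrary, in the former every descending hyperedge needs an
  empty child.\<close>

lemma cond_root_prob_Suc:
  assumes \<eta>: "\<eta> \<subseteq> level k D (Suc n)"
  defines "R \<equiv> (\<Prod>j<D - 1. 1 - (\<Prod>i<k - 1. cond_root_prob k D n (subtree (j, i) \<eta>)))"
  shows "cond_root_prob k D (Suc n) \<eta> = R / (1 + R)"
proof -
  let ?A = "indep_with_boundary k D (Suc n) \<eta>"
  define N where "N j i = real (card (indep_with_boundary k D n (subtree (j, i) \<eta>)))" for j i
  define M where "M j i = real (card {S \<in> indep_with_boundary k D n (subtree (j, i) \<eta>). [] \<in> S})"
    for j i
  define Y where "Y = (\<Prod>j<D - 1. \<Prod>i<k - 1. N j i)"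
  have N_pos: "N j i > 0" for j i
    unfolding N_def using card_indep_with_boundary_pos[OF subtree_subset_level[OF \<eta>]] by simp
  have M_le_N: "(\<Prod>i<k - 1. card {S \<in> indep_with_boundary k D n (subtree (j, i) \<eta>). [] \<in> S})
      \<le> (\<Prod>i<k - 1. card (indep_with_boundary k D n (subtree (j, i) \<eta>)))" for j
    by (intro prod_mono) (auto intro: card_mono finite_indep_with_boundary)
  have Y_pos: "Y > 0"
    unfolding Y_def using N_pos by (simp add: prod_pos)
  have root_notin: "real (card {S \<in> ?A. [] \<notin> S}) = Y"
    unfolding card_root_notin_indep_with_boundary_Suc[OF \<eta>] Y_def N_def by simp
  have "real (card {S \<in> ?A. [] \<in> S}) = (\<Prod>j<D - 1. (\<Prod>i<k - 1. N j i) - (\<Prod>i<k - 1. M j i))"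
    unfolding card_root_in_indep_with_boundary_Suc[OF \<eta>] of_nat_prod N_def M_def
    by (rule prod.cong[OF refl], subst of_nat_diff[OF M_le_N]) (simp add: of_nat_prod)
  also have "\<dots> = Y * R"
    using N_pos by (simp add: prod_diff_prod_eq R_def Y_def cond_root_prob_eq_card_ratio
        N_def M_def prod.distrib)
  finally have root_in: "real (card {S \<in> ?A. [] \<in> S}) = Y * R" .
  have "card ?A = card {S \<in> ?A. [] \<notin> S} + card {S \<in> ?A. [] \<in> S}"
    by (subst card_Un_disjoint[symmetric]) (auto intro: finite_subset[OF _ finite_indep_with_boundary]
        arg_cong[where f = card])
  then have "cond_root_prob k D (Suc n) \<eta> = (Y * R) / (Y + Y * R)"
    unfolding cond_root_prob_eq_card_ratio using root_notin root_in by simp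
  also have "\<dots> = (Y * R) / (Y * (1 + R))"
    by (simp add: algebra_simps)
  also have "\<dots> = R / (1 + R)"
    using Y_pos by simp
  finally show ?thesis .
qed

section \<open>The tree recursion\<close>

definition tree_rec :: "nat \<Rightarrow> nat \<Rightarrow> real \<Rightarrow> real" where
  "tree_rec k D z = (1 - z ^ (k - 1)) ^ (D - 1) / (1 + (1 - z ^ (k - 1)) ^ (D - 1))"

lemma frac_one_plus_mono: "0 \<le> s \<Longrightarrow> s \<le> t \<Longrightarrow> s / (1 + s) \<le> t / (1 + (t::real))"
  by (simp add: field_simps)

lemma tree_rec_antimono:
  assumes "0 \<le> a" "a \<le> b" "b \<le> 1"
  shows "tree_rec k D b \<le> tree_rec k D a"
proof -
  have "b ^ (k - 1) \<le> 1"
    using assms by (simp add: power_le_one)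
  moreover have "a ^ (k - 1) \<le> b ^ (k - 1)"
    using assms by (simp add: power_mono)
  ultimately have "(1 - b ^ (k - 1)) ^ (D - 1) \<le> (1 - a ^ (k - 1)) ^ (D - 1)"
    by (intro power_mono) auto
  then show ?thesis
    unfolding tree_rec_def using \<open>b ^ (k - 1) \<le> 1\<close> by (intro frac_one_plus_mono) simp_all
qed

lemma tree_rec_bounds:
  assumes "0 \<le> a" "a \<le> 1"
  shows "0 \<le> tree_rec k D a" "tree_rec k D a \<le> 1"
proof -
  have "0 \<le> (1 - a ^ (k - 1)) ^ (D - 1)"
    using assms by (simp add: power_le_one)
  then show "0 \<le> tree_rec k D a" "tree_rec k D a \<le> 1"
    unfolding tree_rec_def by (auto simp: field_simps)
qed

lemma funpow_tree_rec_bounds: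
  "0 \<le> a \<Longrightarrow> a \<le> 1 \<Longrightarrow> 0 \<le> (tree_rec k D ^^ n) a \<and> (tree_rec k D ^^ n) a \<le> 1"
  by (induction n) (auto intro: tree_rec_bounds)

lemma isCont_tree_rec:
  assumes "0 \<le> z" "z \<le> 1"
  shows "isCont (tree_rec k D) z"
proof -
  have "0 \<le> (1 - z ^ (k - 1)) ^ (D - 1)"
    using assms by (simp add: power_le_one)
  then show ?thesis
    unfolding tree_rec_def[abs_def] by (intro continuous_intros) auto
qed

lemma tree_rec_differentiable:
  assumes "0 \<le> z" "z \<le> 1"
  obtains Dv where "(tree_rec k D has_real_derivative Dv) (at z)"
proof -
  let ?g = "\<lambda>z. (1 - z ^ (k - 1)) ^ (D - 1)"
  have Dg: "(?g has_real_derivative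
      real (D - 1) * ((0 - real (k - 1) * z ^ (k - 1 - Suc 0)) * (1 - z ^ (k - 1)) ^ (D - 1 - Suc 0))) (at z)"
    by (intro DERIV_power DERIV_diff DERIV_const DERIV_pow)
  have "0 \<le> ?g z"
    using assms by (simp add: power_le_one)
  then have "1 + ?g z \<noteq> 0"
    by linarith
  from DERIV_divide[OF Dg DERIV_add[OF DERIV_const Dg] this]
  show ?thesis
    using that unfolding tree_rec_def[abs_def] by blast
qed

lemma funpow_tree_rec_0_bounds: "0 \<le> (tree_rec k D ^^ n) 0" "(tree_rec k D ^^ n) 0 \<le> 1"
  using funpow_tree_rec_bounds[of 0] by simp_all

lemma cond_root_prob_bounds: "0 \<le> cond_root_prob k D n \<eta> \<and> cond_root_prob k D n \<eta> \<le> 1"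
proof -
  have "card {S \<in> indep_with_boundary k D n \<eta>. [] \<in> S} \<le> card (indep_with_boundary k D n \<eta>)"
    by (intro card_mono finite_indep_with_boundary) auto
  then show ?thesis
    unfolding cond_root_prob_eq_card_ratio by (auto simp: divide_le_eq_1)
qed

lemma cond_root_prob_Suc_bounds:
  assumes \<eta>: "\<eta> \<subseteq> level k D (Suc n)"
    and lo: "0 \<le> lo" "lo \<le> hi" "hi \<le> 1"
    and children: "\<And>j i. j < D - 1 \<Longrightarrow> i < k - 1 \<Longrightarrow>
      lo \<le> cond_root_prob k D n (subtree (j, i) \<eta>) \<and> cond_root_prob k D n (subtree (j, i) \<eta>) \<le> hi"
  shows "tree_rec k D hi \<le> cond_root_prob k D (Suc n) \<eta> \<and> cond_root_prob k D (Suc n) \<eta> \<le> tree_rec k D lo"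
proof -
  let ?p = "\<lambda>j i. cond_root_prob k D n (subtree (j, i) \<eta>)"
  let ?R = "\<Prod>j<D - 1. 1 - (\<Prod>i<k - 1. ?p j i)"
  have lo_le: "lo ^ (k - 1) \<le> (\<Prod>i<k - 1. ?p j i)" if "j < D - 1" for j
    using prod_mono[of "{..<k - 1}" "\<lambda>i. lo" "\<lambda>i. ?p j i"] children that lo by simp
  have le_hi: "(\<Prod>i<k - 1. ?p j i) \<le> hi ^ (k - 1)" if "j < D - 1" for j
    using prod_mono[of "{..<k - 1}" "\<lambda>i. ?p j i" "\<lambda>i. hi"] children that cond_root_prob_bounds
    by simp
  have hi1: "hi ^ (k - 1) \<le> 1"
    using lo by (simp add: power_le_one)
  have R_lower: "(1 - hi ^ (k - 1)) ^ (D - 1) \<le> ?R"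
    using prod_mono[of "{..<D - 1}" "\<lambda>j. 1 - hi ^ (k - 1)" "\<lambda>j. 1 - (\<Prod>i<k - 1. ?p j i)"]
      le_hi hi1 by simp
  have "?R \<le> (\<Prod>j<D - 1. 1 - lo ^ (k - 1))"
  proof (rule prod_mono)
    fix j assume j: "j \<in> {..<D - 1}"
    then have "(\<Prod>i<k - 1. ?p j i) \<le> 1"
      using le_hi[of j] hi1 by simp
    then show "0 \<le> 1 - (\<Prod>i<k - 1. ?p j i) \<and> 1 - (\<Prod>i<k - 1. ?p j i) \<le> 1 - lo ^ (k - 1)"
      using lo_le[of j] j by simp
  qed
  then have R_upper: "?R \<le> (1 - lo ^ (k - 1)) ^ (D - 1)"
    by simp
  have "0 \<le> (1 - hi ^ (k - 1)) ^ (D - 1)"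
    using hi1 by simp
  then show ?thesis
    unfolding cond_root_prob_Suc[OF \<eta>] tree_rec_def
    using R_lower R_upper by (meson frac_one_plus_mono order_trans)
qed

lemma indep_sets_0: "indep_sets k D 0 = Pow {[]}"
  by (auto simp: indep_sets_def hedges_0 hverts_0)

lemma cond_root_prob_0_empty: "cond_root_prob k D 0 {} = 0"
  by (simp add: cond_root_prob_def indep_sets_0 level_0)

lemma cond_root_prob_0_level: "cond_root_prob k D 0 (level k D 0) = 1"
proof -
  have "{S \<in> indep_sets k D 0. S \<inter> {[]} = {[]}} = {{[]}}"
    and "{S \<in> indep_sets k D 0. [] \<in> S \<and> S \<inter> {[]} = {[]}} = {{[]}}"
    by (auto simp: indep_sets_0)
  then show ?thesis
    by (simp add: cond_root_prob_def level_0 conj_commute)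
qed

lemma cond_root_prob_Suc_uniform:
  assumes "\<eta> \<subseteq> level k D (Suc n)"
    and "\<And>j i. j < D - 1 \<Longrightarrow> i < k - 1 \<Longrightarrow> cond_root_prob k D n (subtree (j, i) \<eta>) = z"
  shows "cond_root_prob k D (Suc n) \<eta> = tree_rec k D z"
  using assms by (simp add: cond_root_prob_Suc tree_rec_def)

lemma cond_root_prob_empty: "cond_root_prob k D n {} = (tree_rec k D ^^ n) 0"
  by (induction n) (simp_all add: cond_root_prob_0_empty cond_root_prob_Suc_uniform)

lemma cond_root_prob_level: "cond_root_prob k D n (level k D n) = (tree_rec k D ^^ n) 1"
  by (induction n) (simp_all add: cond_root_prob_0_level cond_root_prob_Suc_uniform subtree_level_Suc)

lemma cond_root_prob_between:
  assumes "\<eta> \<subseteq> level k D n"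
  shows "min ((tree_rec k D ^^ n) 0) ((tree_rec k D ^^ n) 1) \<le> cond_root_prob k D n \<eta> \<and>
         cond_root_prob k D n \<eta> \<le> max ((tree_rec k D ^^ n) 0) ((tree_rec k D ^^ n) 1)"
  using assms
proof (induction n arbitrary: \<eta>)
  case 0
  then show ?case using cond_root_prob_bounds by simp
next
  case (Suc n)
  let ?f = "tree_rec k D"
  let ?u = "(?f ^^ n) 0" and ?v = "(?f ^^ n) 1"
  have u: "0 \<le> ?u \<and> ?u \<le> 1" and v: "0 \<le> ?v \<and> ?v \<le> 1"
    using funpow_tree_rec_bounds[of 0] funpow_tree_rec_bounds[of 1] by auto
  have "?f (max ?u ?v) \<le> cond_root_prob k D (Suc n) \<eta> \<and> cond_root_prob k D (Suc n) \<eta> \<le> ?f (min ?u ?v)"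
    by (rule cond_root_prob_Suc_bounds[OF Suc.prems])
      (use u v Suc.IH[OF subtree_subset_level[OF Suc.prems]] in auto)
  moreover have "?f (max ?u ?v) = min (?f ?u) (?f ?v)" "?f (min ?u ?v) = max (?f ?u) (?f ?v)"
    using u v tree_rec_antimono[of ?u ?v k D] tree_rec_antimono[of ?v ?u k D]
    by (auto simp: max_def min_def)
  ultimately show ?case by simp
qed

lemma boundary_gap_eq: "boundary_gap k D n = \<bar>(tree_rec k D ^^ n) 0 - (tree_rec k D ^^ n) 1\<bar>"
proof -
  let ?p = "cond_root_prob k D n"
  let ?G = "{\<bar>?p \<eta> - ?p \<eta>'\<bar> | \<eta> \<eta>'. \<eta> \<subseteq> level k D n \<and> \<eta>' \<subseteq> level k D n}"
  have "?G = (\<lambda>(\<eta>, \<eta>'). \<bar>?p \<eta> - ?p \<eta>'\<bar>) ` (Pow (level k D n) \<times> Pow (level k D n))"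
    by auto
  then have "finite ?G"
    using finite_level by simp
  then show ?thesis
    unfolding boundary_gap_def
  proof (rule Max_eqI)
    fix y assume "y \<in> ?G"
    then obtain \<eta> \<eta>' where "y = \<bar>?p \<eta> - ?p \<eta>'\<bar>" "\<eta> \<subseteq> level k D n" "\<eta>' \<subseteq> level k D n"
      by blast
    then show "y \<le> \<bar>(tree_rec k D ^^ n) 0 - (tree_rec k D ^^ n) 1\<bar>"
      using cond_root_prob_between[of \<eta> k D n] cond_root_prob_between[of \<eta>' k D n]
      by (auto simp: abs_if min_def max_def split: if_splits)
  next
    show "\<bar>(tree_rec k D ^^ n) 0 - (tree_rec k D ^^ n) 1\<bar> \<in> ?G"
      unfolding cond_root_prob_empty[symmetric] cond_root_prob_level[symmetric] by blast
  qed
qed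

section \<open>Log-convexity and the recursion in logit coordinates\<close>

lemma Holder_two_terms:
  fixes u1 u2 v1 v2 t :: real
  assumes "0 < u1" "0 < u2" "0 < v1" "0 < v2" "0 \<le> t" "t \<le> 1"
  shows "u1 powr t * v1 powr (1 - t) + u2 powr t * v2 powr (1 - t)
    \<le> (u1 + u2) powr t * (v1 + v2) powr (1 - t)"
proof -
  define U V where "U = u1 + u2" and "V = v1 + v2"
  have UV: "U > 0" "V > 0"
    using assms by (auto simp: U_def V_def)
  have "(u1 / U) powr t * (v1 / V) powr (1 - t) \<le> t * (u1 / U) + (1 - t) * (v1 / V)"
    and "(u2 / U) powr t * (v2 / V) powr (1 - t) \<le> t * (u2 / U) + (1 - t) * (v2 / V)"
    by (rule Youngs_inequality_0; use assms UV in simp)+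
  moreover have "u1 / U + u2 / U = 1" "v1 / V + v2 / V = 1"
    using UV by (simp_all add: U_def V_def add_divide_distrib[symmetric])
  then have "t * (u1 / U) + (1 - t) * (v1 / V) + (t * (u2 / U) + (1 - t) * (v2 / V)) = 1"
    by (metis add.commute add.left_commute diff_add_cancel distrib_left mult.right_neutral)
  ultimately have "(u1 / U) powr t * (v1 / V) powr (1 - t) + (u2 / U) powr t * (v2 / V) powr (1 - t) \<le> 1"
    by linarith
  moreover have "(u / U) powr t * (v / V) powr (1 - t) = (u powr t * v powr (1 - t)) / (U powr t * V powr (1 - t))"
    if "0 < u" "0 < v" for u v
    using that UV by (simp add: powr_divide)
  ultimately show ?thesis
    using assms UV unfolding U_def V_def by (simp add: divide_le_eq add_divide_distrib[symmetric])
qed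

definition log_convex :: "(real \<Rightarrow> real) \<Rightarrow> bool" where
  "log_convex f \<longleftrightarrow> (\<forall>s. 0 < f s) \<and>
    (\<forall>s t l. 0 \<le> l \<longrightarrow> l \<le> 1 \<longrightarrow> f (l * s + (1 - l) * t) \<le> f s powr l * f t powr (1 - l))"

lemma log_convex_add:
  assumes "log_convex f" "log_convex g"
  shows "log_convex (\<lambda>s. f s + g s)"
  unfolding log_convex_def
proof (intro conjI allI impI)
  fix s show "0 < f s + g s"
    using assms by (simp add: log_convex_def add_pos_pos)
next
  fix s t l :: real assume l: "0 \<le> l" "l \<le> 1"
  have "f (l * s + (1 - l) * t) + g (l * s + (1 - l) * t)
      \<le> f s powr l * f t powr (1 - l) + g s powr l * g t powr (1 - l)"
    using assms l unfolding log_convex_def by (meson add_mono)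
  also have "\<dots> \<le> (f s + g s) powr l * (f t + g t) powr (1 - l)"
    using assms l by (intro Holder_two_terms) (auto simp: log_convex_def)
  finally show "f (l * s + (1 - l) * t) + g (l * s + (1 - l) * t)
      \<le> (f s + g s) powr l * (f t + g t) powr (1 - l)" .
qed

lemma log_convex_mult:
  assumes "log_convex f" "log_convex g"
  shows "log_convex (\<lambda>s. f s * g s)"
  unfolding log_convex_def
proof (intro conjI allI impI)
  fix s show "0 < f s * g s"
    using assms by (simp add: log_convex_def)
next
  fix s t l :: real assume l: "0 \<le> l" "l \<le> 1"
  have "f (l * s + (1 - l) * t) * g (l * s + (1 - l) * t)
      \<le> (f s powr l * f t powr (1 - l)) * (g s powr l * g t powr (1 - l))"
    using assms l unfolding log_convex_def by (intro mult_mono) (auto intro: less_imp_le)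
  also have "\<dots> = (f s * g s) powr l * (f t * g t) powr (1 - l)"
    using assms by (simp add: log_convex_def powr_mult)
  finally show "f (l * s + (1 - l) * t) * g (l * s + (1 - l) * t)
      \<le> (f s * g s) powr l * (f t * g t) powr (1 - l)" .
qed

lemma log_convex_const: "0 < c \<Longrightarrow> log_convex (\<lambda>s. c)"
  unfolding log_convex_def by (simp add: powr_add[symmetric])

lemma log_convex_exp_uminus: "log_convex (\<lambda>s. exp (- s))"
  unfolding log_convex_def
proof (intro conjI allI impI)
  fix s t l :: real
  have "exp (- s) powr l * exp (- t) powr (1 - l) = exp (- (l * s + (1 - l) * t))"
    by (simp add: powr_def exp_add[symmetric] algebra_simps)
  then show "exp (- (l * s + (1 - l) * t)) \<le> exp (- s) powr l * exp (- t) powr (1 - l)"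
    by simp
qed simp

lemma log_convex_power: "log_convex f \<Longrightarrow> log_convex (\<lambda>s. f s ^ n)"
  by (induction n) (simp_all add: log_convex_const log_convex_mult)

lemma log_convex_sum:
  assumes "finite A" "A \<noteq> {}" "\<And>j. j \<in> A \<Longrightarrow> log_convex (f j)"
  shows "log_convex (\<lambda>s. \<Sum>j\<in>A. f j s)"
  using assms by (induction A rule: finite_ne_induct) (simp_all add: log_convex_add)

definition recip_sigmoid :: "real \<Rightarrow> real" where
  "recip_sigmoid s = 1 + exp (- s)"

definition recip_sigmoid_power_sum :: "nat \<Rightarrow> real \<Rightarrow> real" where
  "recip_sigmoid_power_sum m s = (\<Sum>j=1..m. recip_sigmoid s ^ j)"

text \<open>The tree recursion in logit coordinates, with $m = k - 1$ and $d = \Delta - 1$.\<close>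

definition conj_rec :: "nat \<Rightarrow> nat \<Rightarrow> real \<Rightarrow> real" where
  "conj_rec m d s = real d * (ln (recip_sigmoid s ^ m - 1) - real m * ln (recip_sigmoid s))"

definition conj_rec_slope :: "nat \<Rightarrow> nat \<Rightarrow> real \<Rightarrow> real" where
  "conj_rec_slope m d s = real d * real m / recip_sigmoid_power_sum m s"

lemma recip_sigmoid_gt_1: "1 < recip_sigmoid s"
  by (simp add: recip_sigmoid_def)

lemma recip_sigmoid_power_gt_1: "m \<ge> 1 \<Longrightarrow> 1 < recip_sigmoid s ^ m"
  using recip_sigmoid_gt_1 by (simp add: one_less_power)

lemma recip_sigmoid_power_sum_eq:
  "recip_sigmoid_power_sum m s = recip_sigmoid s * (recip_sigmoid s ^ m - 1) / (recip_sigmoid s - 1)"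
proof -
  have "recip_sigmoid_power_sum m s * (recip_sigmoid s - 1) = recip_sigmoid s * (recip_sigmoid s ^ m - 1)"
    by (induction m) (simp_all add: recip_sigmoid_power_sum_def sum.cl_ivl_Suc algebra_simps)
  then show ?thesis
    using recip_sigmoid_gt_1[of s] by (simp add: field_simps)
qed

lemma recip_sigmoid_power_sum_pos: "m \<ge> 1 \<Longrightarrow> 0 < recip_sigmoid_power_sum m s"
  using recip_sigmoid_gt_1[of s] recip_sigmoid_power_gt_1[of m s]
  by (simp add: recip_sigmoid_power_sum_eq)

lemma recip_sigmoid_power_sum_antimono:
  "s \<le> t \<Longrightarrow> recip_sigmoid_power_sum m t \<le> recip_sigmoid_power_sum m s"
  unfolding recip_sigmoid_power_sum_def using recip_sigmoid_gt_1[of t]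
  by (intro sum_mono power_mono) (auto simp: recip_sigmoid_def)

lemma log_convex_recip_sigmoid_power_sum: "m \<ge> 1 \<Longrightarrow> log_convex (recip_sigmoid_power_sum m)"
  unfolding recip_sigmoid_power_sum_def[abs_def] recip_sigmoid_def
  by (intro log_convex_sum log_convex_power log_convex_add log_convex_const log_convex_exp_uminus)
    auto

lemma conj_rec_slope_pos: "m \<ge> 1 \<Longrightarrow> d \<ge> 1 \<Longrightarrow> 0 < conj_rec_slope m d s"
  using recip_sigmoid_power_sum_pos by (simp add: conj_rec_slope_def)

lemma conj_rec_slope_mono: "m \<ge> 1 \<Longrightarrow> s \<le> t \<Longrightarrow> conj_rec_slope m d s \<le> conj_rec_slope m d t"
  unfolding conj_rec_slope_def
  using recip_sigmoid_power_sum_antimono[of s t m] recip_sigmoid_power_sum_pos[of m]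
  by (intro divide_left_mono) auto

lemma conj_rec_slope_log_concave:
  assumes m: "m \<ge> 1" and d: "d \<ge> 1" and l: "0 \<le> l" "l \<le> 1"
  shows "conj_rec_slope m d s powr l * conj_rec_slope m d t powr (1 - l)
    \<le> conj_rec_slope m d (l * s + (1 - l) * t)"
proof -
  let ?P = "recip_sigmoid_power_sum m"
  define c where "c = real d * real m"
  have c: "0 < c"
    using m d by (simp add: c_def)
  have P: "0 < ?P s" "0 < ?P t" "0 < ?P (l * s + (1 - l) * t)"
    using recip_sigmoid_power_sum_pos[OF m] by auto
  have "conj_rec_slope m d s powr l * conj_rec_slope m d t powr (1 - l)
      = c powr l * c powr (1 - l) / (?P s powr l * ?P t powr (1 - l))"
    unfolding conj_rec_slope_def c_def[symmetric] using c P by (simp add: powr_divide)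
  also have "\<dots> = c / (?P s powr l * ?P t powr (1 - l))"
    using c by (simp add: powr_add[symmetric])
  also have "\<dots> \<le> c / ?P (l * s + (1 - l) * t)"
  proof (rule divide_left_mono)
    show "?P (l * s + (1 - l) * t) \<le> ?P s powr l * ?P t powr (1 - l)"
      using log_convex_recip_sigmoid_power_sum[OF m] l unfolding log_convex_def by blast
  qed (use c P in simp_all)
  also have "\<dots> = conj_rec_slope m d (l * s + (1 - l) * t)"
    by (simp add: conj_rec_slope_def c_def)
  finally show ?thesis .
qed

lemma has_real_derivative_conj_rec:
  assumes m: "m \<ge> 1"
  shows "(conj_rec m d has_real_derivative - conj_rec_slope m d s) (at s)"
proof -
  let ?B = "recip_sigmoid s"
  have B: "1 < ?B" "1 < ?B ^ m"
    using recip_sigmoid_gt_1 recip_sigmoid_power_gt_1[OF m] by auto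
  have dB: "(recip_sigmoid has_real_derivative 1 - ?B) (at s)"
    unfolding recip_sigmoid_def[abs_def] by (auto intro!: derivative_eq_intros)
  have "((\<lambda>s. ln (recip_sigmoid s ^ m - 1)) has_real_derivative
      1 / (?B ^ m - 1) * (real m * ((1 - ?B) * ?B ^ (m - Suc 0)) - 0)) (at s)"
    using B by (intro DERIV_chain2[OF DERIV_ln_divide] DERIV_diff DERIV_power dB DERIV_const) simp
  moreover have "((\<lambda>s. ln (recip_sigmoid s)) has_real_derivative 1 / ?B * (1 - ?B)) (at s)"
    using B by (intro DERIV_chain2[OF DERIV_ln_divide] dB) simp
  ultimately have "(conj_rec m d has_real_derivative real d *
      (1 / (?B ^ m - 1) * (real m * ((1 - ?B) * ?B ^ (m - Suc 0)) - 0) - real m * (1 / ?B * (1 - ?B))))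
      (at s)"
    unfolding conj_rec_def[abs_def] by (intro DERIV_cmult DERIV_diff)
  moreover have "?B ^ m = ?B * ?B ^ (m - Suc 0)"
    using m by (simp add: power_eq_if)
  then have "real d * (1 / (?B ^ m - 1) * (real m * ((1 - ?B) * ?B ^ (m - Suc 0)) - 0)
      - real m * (1 / ?B * (1 - ?B))) = - conj_rec_slope m d s"
    unfolding conj_rec_slope_def recip_sigmoid_power_sum_eq using B by (simp add: field_simps)
  ultimately show ?thesis by simp
qed

lemma conj_rec_concave:
  assumes m: "m \<ge> 1" and l: "0 \<le> l" "l \<le> 1"
  shows "l * conj_rec m d a + (1 - l) * conj_rec m d b \<le> conj_rec m d (l * a + (1 - l) * b)"
proof -
  have "convex_on UNIV (\<lambda>s. - conj_rec m d s)"
  proof (rule convex_on_realI[where f' = "conj_rec_slope m d"])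
    show "((\<lambda>s. - conj_rec m d s) has_real_derivative conj_rec_slope m d s) (at s)" for s
      using DERIV_minus[OF has_real_derivative_conj_rec[OF m]] by simp
  qed (use conj_rec_slope_mono[OF m] in auto)
  from convex_onD[OF this, of "1 - l" a b] l show ?thesis
    by simp
qed

lemma conj_rec_twice_critical_point:
  assumes m: "m \<ge> 1" and "a < b"
    and "conj_rec m d (conj_rec m d a) - a = conj_rec m d (conj_rec m d b) - b"
  obtains c where "a < c" "c < b" "conj_rec_slope m d (conj_rec m d c) * conj_rec_slope m d c = 1"
proof -
  let ?P = "\<lambda>s. conj_rec m d (conj_rec m d s) - s"
  have dP: "(?P has_real_derivative
      - conj_rec_slope m d (conj_rec m d s) * - conj_rec_slope m d s - 1) (at s)" for s
    by (intro DERIV_diff DERIV_chain2[OF has_real_derivative_conj_rec[OF m]]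
        has_real_derivative_conj_rec[OF m] DERIV_ident)
  have "continuous_on {a..b} ?P"
    using dP by (meson DERIV_isCont continuous_at_imp_continuous_on)
  moreover have "?P differentiable (at s)" for s
    using dP real_differentiable_def by blast
  ultimately obtain c where c: "a < c" "c < b" "(?P has_real_derivative 0) (at c)"
    using Rolle[OF assms(2,3)] by blast
  have "- conj_rec_slope m d (conj_rec m d c) * - conj_rec_slope m d c - 1 = 0"
    using DERIV_unique[OF dP c(3)] .
  then show ?thesis
    by (intro that[OF c(1,2)]) simp
qed

text \<open>A 2-cycle $a < x < b$ around a fixed point forces a slope at least 1 at the fixed point:
  Rolle's theorem on $F \circ F - \mathrm{id}$ gives points $c_1 \in (a,x)$, $c_2 \in (x,b)$ where
  $(F \circ F)' = 1$; writing $x$ as a convex combination of $c_1, c_2$, concavity of $F$ and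
  monotonicity and log-concavity of $-F'$ bound $F'(x)^2 = F'(F x)\, F'(x)$ from below by
  the geometric mean of $(F \circ F)'(c_1) = (F \circ F)'(c_2) = 1$.\<close>

lemma conj_rec_two_cycle_slope_ge_1:
  assumes m: "m \<ge> 1" and d: "d \<ge> 1"
    and ord: "a < x" "x < b"
    and cycle: "conj_rec m d a = b" "conj_rec m d b = a" and fixed: "conj_rec m d x = x"
  shows "1 \<le> conj_rec_slope m d x"
proof -
  let ?F = "conj_rec m d" and ?r = "conj_rec_slope m d"
  obtain c1 where c1: "a < c1" "c1 < x" "?r (?F c1) * ?r c1 = 1"
    using conj_rec_twice_critical_point[OF m ord(1), of d] cycle fixed by auto
  obtain c2 where c2: "x < c2" "c2 < b" "?r (?F c2) * ?r c2 = 1"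
    using conj_rec_twice_critical_point[OF m ord(2), of d] cycle fixed by auto
  define l where "l = (c2 - x) / (c2 - c1)"
  have l: "0 \<le> l" "l \<le> 1"
    using c1 c2 by (auto simp: l_def field_simps)
  have "l * (c2 - c1) = c2 - x"
    using c1 c2 by (simp add: l_def)
  then have mid: "l * c1 + (1 - l) * c2 = x"
    by (simp add: algebra_simps)
  have r_pos: "0 < ?r s" for s
    using conj_rec_slope_pos[OF m d] .
  have slope_x: "?r c1 powr l * ?r c2 powr (1 - l) \<le> ?r x"
    using conj_rec_slope_log_concave[OF m d l, of c1 c2] mid by simp
  have "l * ?F c1 + (1 - l) * ?F c2 \<le> ?F x"
    using conj_rec_concave[OF m l, of d c1 c2] mid by simp
  then have "?r (l * ?F c1 + (1 - l) * ?F c2) \<le> ?r x"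
    using conj_rec_slope_mono[OF m] fixed by metis
  then have slope_Fx: "?r (?F c1) powr l * ?r (?F c2) powr (1 - l) \<le> ?r x"
    using conj_rec_slope_log_concave[OF m d l, of "?F c1" "?F c2"] by simp
  have "1 = (?r (?F c1) * ?r c1) powr l * (?r (?F c2) * ?r c2) powr (1 - l)"
    using c1 c2 by simp
  also have "\<dots> = (?r c1 powr l * ?r c2 powr (1 - l)) * (?r (?F c1) powr l * ?r (?F c2) powr (1 - l))"
    using r_pos by (simp add: powr_mult algebra_simps)
  also have "\<dots> \<le> ?r x * ?r x"
    using slope_x slope_Fx r_pos by (intro mult_mono) (auto intro: less_imp_le)
  finally have "1\<^sup>2 \<le> (?r x)\<^sup>2"
    by (simp add: power2_eq_square)
  then show ?thesis
    using r_pos[of x] by (rule power2_le_imp_le[OF _ less_imp_le])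
qed

definition logit :: "real \<Rightarrow> real" where
  "logit z = ln (z / (1 - z))"

lemma recip_sigmoid_logit: "0 < z \<Longrightarrow> z < 1 \<Longrightarrow> recip_sigmoid (logit z) = 1 / z"
  by (simp add: recip_sigmoid_def logit_def exp_minus field_simps)

lemma logit_strict_mono:
  assumes "0 < a" "a < b" "b < 1"
  shows "logit a < logit b"
proof -
  have "a / (1 - a) < b / (1 - b)"
    using assms by (simp add: field_simps)
  then show ?thesis
    using assms by (simp add: logit_def)
qed

lemma has_real_derivative_logit:
  assumes "0 < z" "z < 1"
  shows "(logit has_real_derivative 1 / (z * (1 - z))) (at z)"
proof -
  have "((\<lambda>z. ln (z / (1 - z))) has_real_derivative
      1 / (z / (1 - z)) * ((1 * (1 - z) - z * (0 - 1)) / ((1 - z) * (1 - z)))) (at z)"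
    using assms by (intro DERIV_chain2[OF DERIV_ln_divide] DERIV_divide DERIV_diff DERIV_ident DERIV_const)
      simp_all
  moreover have "1 / (z / (1 - z)) * ((1 * (1 - z) - z * (0 - 1)) / ((1 - z) * (1 - z))) = 1 / (z * (1 - z))"
    using assms by (simp add: divide_simps)
  ultimately show ?thesis
    unfolding logit_def[abs_def] by simp
qed

lemma conj_rec_logit:
  assumes "0 < z" "z < 1"
  shows "conj_rec m d (logit z) = real d * ln (1 - z ^ m)"
proof (cases "m = 0")
  case False
  then have zm: "z ^ m < 1" "0 < z ^ m"
    using assms by (simp_all add: power_less_one_iff)
  have "recip_sigmoid (logit z) ^ m - 1 = (1 - z ^ m) / z ^ m"
    using assms zm by (simp add: recip_sigmoid_logit power_one_over field_simps)
  then show ?thesis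
    using assms zm by (simp add: conj_rec_def recip_sigmoid_logit ln_div ln_realpow algebra_simps)
qed (simp add: conj_rec_def)

section \<open>Dynamics of the tree recursion\<close>

lemma limsup_ereal_eq_0_iff:
  fixes X :: "nat \<Rightarrow> real"
  assumes "\<And>n. 0 \<le> X n"
  shows "limsup (\<lambda>n. ereal (X n)) = 0 \<longleftrightarrow> X \<longlonglongrightarrow> 0"
proof
  assume limsup: "limsup (\<lambda>n. ereal (X n)) = 0"
  have "0 \<le> liminf (\<lambda>n. ereal (X n))"
    by (rule Liminf_bounded) (use assms in simp)
  moreover have "liminf (\<lambda>n. ereal (X n)) \<le> limsup (\<lambda>n. ereal (X n))"
    by (rule Liminf_le_Limsup) simp
  ultimately have "liminf (\<lambda>n. ereal (X n)) = 0"
    using limsup by simp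
  then have "(\<lambda>n. ereal (X n)) \<longlonglongrightarrow> ereal 0"
    using Liminf_eq_Limsup[OF _ _ limsup] by (simp add: zero_ereal_def)
  then show "X \<longlonglongrightarrow> 0" by simp
next
  assume "X \<longlonglongrightarrow> 0"
  then have "(\<lambda>n. ereal (X n)) \<longlonglongrightarrow> ereal 0" by simp
  then show "limsup (\<lambda>n. ereal (X n)) = 0"
    by (simp add: lim_imp_Limsup zero_ereal_def)
qed

lemma has_uniqueness_iff_gap_tendsto_0:
  "has_uniqueness k D \<longleftrightarrow> (\<lambda>n. \<bar>(tree_rec k D ^^ n) 0 - (tree_rec k D ^^ n) 1\<bar>) \<longlonglongrightarrow> 0"
  unfolding has_uniqueness_def boundary_gap_eq by (rule limsup_ereal_eq_0_iff) simp

context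
  fixes k D :: nat
  assumes k2: "k \<ge> 2" and D2: "D \<ge> 2"
begin

lemma tree_rec_strict_antimono:
  assumes "0 \<le> a" "a < b" "b \<le> 1"
  shows "tree_rec k D b < tree_rec k D a"
proof -
  have "b ^ (k - 1) \<le> 1"
    using assms by (simp add: power_le_one)
  moreover have "a ^ (k - 1) < b ^ (k - 1)"
    using assms k2 by (intro power_strict_mono) auto
  ultimately have "(1 - b ^ (k - 1)) ^ (D - 1) < (1 - a ^ (k - 1)) ^ (D - 1)"
    using D2 by (intro power_strict_mono) auto
  moreover have "0 \<le> (1 - b ^ (k - 1)) ^ (D - 1)"
    using \<open>b ^ (k - 1) \<le> 1\<close> by simp
  ultimately show ?thesis
    unfolding tree_rec_def by (simp add: field_simps)
qed

lemma tree_rec_0: "tree_rec k D 0 = 1 / 2"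
  using k2 by (simp add: tree_rec_def power_0_left)

lemma tree_rec_1: "tree_rec k D 1 = 0"
  using D2 by (simp add: tree_rec_def power_0_left)

lemma tree_rec_pos: "0 \<le> z \<Longrightarrow> z < 1 \<Longrightarrow> 0 < tree_rec k D z"
  using k2 by (simp add: tree_rec_def power_less_one_iff add_pos_pos)

lemma tree_rec_le_half:
  assumes "0 \<le> z" "z \<le> 1"
  shows "tree_rec k D z \<le> 1 / 2"
  using tree_rec_antimono[of 0 z k D] tree_rec_0 assms by simp

lemma tree_rec_fixpoint_bounds:
  assumes "0 \<le> x" "x \<le> 1" "tree_rec k D x = x"
  shows "0 < x" "x < 1"
proof -
  show "0 < x"
    using assms tree_rec_0 by (cases "x = 0") auto
  show "x < 1"
    using assms tree_rec_1 by (cases "x = 1") auto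
qed

lemma gap_Suc_eq: "\<bar>(tree_rec k D ^^ Suc n) 0 - (tree_rec k D ^^ Suc n) 1\<bar> =
    \<bar>(tree_rec k D ^^ Suc n) 0 - (tree_rec k D ^^ n) 0\<bar>"
  by (simp add: funpow_Suc_right tree_rec_1 del: funpow.simps)

lemma funpow_tree_rec_double_Suc:
  "(tree_rec k D ^^ (2 * Suc n)) z = tree_rec k D (tree_rec k D ((tree_rec k D ^^ (2 * n)) z))"
  by (simp add: numeral_2_eq_2)

lemma has_uniqueness_iff_steps_tendsto_0:
  "has_uniqueness k D \<longleftrightarrow>
    (\<lambda>n. \<bar>(tree_rec k D ^^ Suc n) 0 - (tree_rec k D ^^ n) 0\<bar>) \<longlonglongrightarrow> 0"
proof -
  have "has_uniqueness k D \<longleftrightarrow>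
      (\<lambda>n. \<bar>(tree_rec k D ^^ Suc n) 0 - (tree_rec k D ^^ Suc n) 1\<bar>) \<longlonglongrightarrow> 0"
    unfolding has_uniqueness_iff_gap_tendsto_0 by (rule filterlim_sequentially_Suc[symmetric])
  then show ?thesis
    by (simp only: gap_Suc_eq)
qed

lemma logit_tree_rec:
  assumes "0 < z" "z < 1"
  shows "logit (tree_rec k D z) = conj_rec (k - 1) (D - 1) (logit z)"
proof -
  have "z ^ (k - 1) < 1"
    using assms k2 by (simp add: power_less_one_iff)
  then have "0 < (1 - z ^ (k - 1)) ^ (D - 1)"
    by simp
  then have "tree_rec k D z / (1 - tree_rec k D z) = (1 - z ^ (k - 1)) ^ (D - 1)"
    unfolding tree_rec_def by (simp add: field_simps)
  then have "logit (tree_rec k D z) = real (D - 1) * ln (1 - z ^ (k - 1))"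
    using \<open>z ^ (k - 1) < 1\<close> by (simp add: logit_def ln_realpow)
  then show ?thesis
    using conj_rec_logit[OF assms] by simp
qed

text \<open>Differentiating the conjugation identity at a fixed point $x$: the factors $\mathrm{logit}'(x)$
  on both sides cancel because $f(x) = x$.\<close>

lemma has_real_derivative_tree_rec_at_fixpoint:
  assumes x: "0 < x" "x < 1" "tree_rec k D x = x"
  shows "(tree_rec k D has_real_derivative - conj_rec_slope (k - 1) (D - 1) (logit x)) (at x)"
proof -
  let ?f = "tree_rec k D" and ?F = "conj_rec (k - 1) (D - 1)"
  have m: "k - 1 \<ge> 1"
    using k2 by simp
  obtain Dv where Dv: "(?f has_real_derivative Dv) (at x)"
    using tree_rec_differentiable x by (meson less_imp_le)
  have "((\<lambda>z. logit (?f z)) has_real_derivative 1 / (x * (1 - x)) * Dv) (at x)"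
    using DERIV_chain2[OF has_real_derivative_logit Dv] x by simp
  then have "((\<lambda>z. ?F (logit z)) has_real_derivative 1 / (x * (1 - x)) * Dv) (at x)"
    by (rule has_field_derivative_transform_within_open[where S = "{0<..<1}"])
      (use x in \<open>auto simp: logit_tree_rec\<close>)
  moreover have "((\<lambda>z. ?F (logit z)) has_real_derivative
      - conj_rec_slope (k - 1) (D - 1) (logit x) * (1 / (x * (1 - x)))) (at x)"
    using DERIV_chain2[OF has_real_derivative_conj_rec[OF m] has_real_derivative_logit] x by simp
  ultimately have "1 / (x * (1 - x)) * Dv = 1 / (x * (1 - x)) * - conj_rec_slope (k - 1) (D - 1) (logit x)"
    by (metis DERIV_unique mult.commute)
  moreover have "1 / (x * (1 - x)) \<noteq> 0"
    using x by simp
  ultimately have "Dv = - conj_rec_slope (k - 1) (D - 1) (logit x)"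
    using mult_left_cancel by blast
  then show ?thesis
    using Dv by simp
qed

context
  fixes x :: real
  assumes x: "0 \<le> x" "x \<le> 1" "tree_rec k D x = x"
    and unique: "\<forall>y\<in>{0..1}. tree_rec k D y = y \<longrightarrow> y = x"
begin

lemma even_iterate_less_fixpoint: "(tree_rec k D ^^ (2 * n)) 0 < x"
proof (induction n)
  case 0
  then show ?case using tree_rec_fixpoint_bounds[OF x] by simp
next
  case (Suc n)
  let ?f = "tree_rec k D" and ?e = "(tree_rec k D ^^ (2 * n)) 0"
  have e: "0 \<le> ?e" "?e \<le> 1"
    using funpow_tree_rec_bounds[of 0] by auto
  then have "x < ?f ?e"
    using tree_rec_strict_antimono[of ?e x] Suc x by simp
  moreover have "?f ?e \<le> 1"
    using tree_rec_le_half[OF e] by simp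
  ultimately have "?f (?f ?e) < ?f x"
    using tree_rec_strict_antimono[of x "?f ?e"] x by simp
  then show ?case
    using x(3) by (simp only: funpow_tree_rec_double_Suc)
qed

lemma incseq_even_iterates: "incseq (\<lambda>n. (tree_rec k D ^^ (2 * n)) 0)"
proof (rule incseq_SucI)
  fix n
  show "(tree_rec k D ^^ (2 * n)) 0 \<le> (tree_rec k D ^^ (2 * Suc n)) 0"
  proof (induction n)
    case 0
    then show ?case
      using funpow_tree_rec_bounds[where a = 0 and n = 2] by simp
  next
    case (Suc n)
    let ?f = "tree_rec k D"
    let ?a = "(?f ^^ (2 * n)) 0" and ?b = "(?f ^^ (2 * Suc n)) 0"
    have "?f ?b \<le> ?f ?a"
      using tree_rec_antimono[OF funpow_tree_rec_0_bounds(1) Suc.IH funpow_tree_rec_0_bounds(2)] .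
    moreover have "0 \<le> ?f ?b" "?f ?a \<le> 1"
      by (intro tree_rec_bounds funpow_tree_rec_0_bounds)+
    ultimately have "?f (?f ?a) \<le> ?f (?f ?b)"
      using tree_rec_antimono[of "?f ?b" "?f ?a" k D] by blast
    then show ?case
      by (simp only: funpow_tree_rec_double_Suc)
  qed
qed

lemma even_iterates_tendsto:
  obtains L where "(\<lambda>n. (tree_rec k D ^^ (2 * n)) 0) \<longlonglongrightarrow> L"
    and "0 < L" "L \<le> x" "tree_rec k D (tree_rec k D L) = L"
proof -
  let ?f = "tree_rec k D"
  let ?e = "\<lambda>n. (?f ^^ (2 * n)) 0"
  have "\<forall>n. ?e n \<le> x"
    using even_iterate_less_fixpoint less_imp_le by blast
  then obtain L where L: "?e \<longlonglongrightarrow> L" "\<forall>n. ?e n \<le> L"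
    using incseq_convergent[OF incseq_even_iterates] by blast
  have "L \<le> x"
    using LIMSEQ_le_const2[OF L(1)] even_iterate_less_fixpoint less_imp_le by blast
  have "?e 1 = ?f (1 / 2)"
    by (simp add: numeral_2_eq_2 tree_rec_0)
  then have "0 < ?e 1"
    using tree_rec_pos[of "1 / 2"] by simp
  then have "0 < L"
    using L(2) less_le_trans by blast
  have "0 \<le> ?f L" "?f L \<le> 1"
    using \<open>0 < L\<close> \<open>L \<le> x\<close> x(2) by (intro tree_rec_bounds; simp)+
  then have "(\<lambda>n. ?f (?f (?e n))) \<longlonglongrightarrow> ?f (?f L)"
    using \<open>0 < L\<close> \<open>L \<le> x\<close> x(2)
    by (intro isCont_tendsto_compose[OF isCont_tree_rec] L(1)) simp_all
  moreover have "(\<lambda>n. ?f (?f (?e n))) \<longlonglongrightarrow> L"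
    using LIMSEQ_Suc[OF L(1)] by (simp only: funpow_tree_rec_double_Suc)
  ultimately have "?f (?f L) = L"
    by (rule LIMSEQ_unique)
  then show ?thesis
    using that L(1) \<open>0 < L\<close> \<open>L \<le> x\<close> by blast
qed

lemma has_uniqueness_iff_even_limit:
  assumes L: "(\<lambda>n. (tree_rec k D ^^ (2 * n)) 0) \<longlonglongrightarrow> L" "0 \<le> L" "L \<le> 1"
  shows "has_uniqueness k D \<longleftrightarrow> L = x"
proof -
  let ?f = "tree_rec k D"
  let ?a = "\<lambda>n. (?f ^^ n) 0"
  have odd: "(\<lambda>n. ?a (Suc (2 * n))) \<longlonglongrightarrow> ?f L"
    using isCont_tendsto_compose[OF isCont_tree_rec[OF L(2,3)] L(1)] by (simp only: funpow.simps o_apply)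
  show ?thesis
  proof
    assume "has_uniqueness k D"
    then have "(\<lambda>n. \<bar>?a (Suc n) - ?a n\<bar>) \<longlonglongrightarrow> 0"
      using has_uniqueness_iff_steps_tendsto_0 by blast
    moreover have "strict_mono (\<lambda>n::nat. 2 * n)"
      by (rule strict_monoI) simp
    ultimately have "(\<lambda>n. \<bar>?a (Suc (2 * n)) - ?a (2 * n)\<bar>) \<longlonglongrightarrow> 0"
      using LIMSEQ_subseq_LIMSEQ by (simp only: comp_def)
    moreover have "(\<lambda>n. \<bar>?a (Suc (2 * n)) - ?a (2 * n)\<bar>) \<longlonglongrightarrow> \<bar>?f L - L\<bar>"
      by (intro tendsto_rabs tendsto_diff odd L(1))
    ultimately have "0 = \<bar>?f L - L\<bar>"
      by (rule LIMSEQ_unique)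
    then show "L = x"
      using unique L(2,3) by simp
  next
    assume "L = x"
    then have "(\<lambda>n. ?a (2 * n)) \<longlonglongrightarrow> x" "(\<lambda>n. ?a (2 * n + 1)) \<longlonglongrightarrow> x"
      using L(1) odd x(3) by simp_all
    then have a: "?a \<longlonglongrightarrow> x"
      by (rule limseq_even_odd)
    have "(\<lambda>n. \<bar>?a (Suc n) - ?a n\<bar>) \<longlonglongrightarrow> \<bar>x - x\<bar>"
      by (rule tendsto_rabs[OF tendsto_diff[OF LIMSEQ_Suc[OF a] a]])
    then show "has_uniqueness k D"
      using has_uniqueness_iff_steps_tendsto_0 by simp
  qed
qed


lemma two_cycle_if_not_has_uniqueness:
  assumes "\<not> has_uniqueness k D"
  obtains a b where "0 < a" "a < x" "x < b" "b < 1"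
    "tree_rec k D a = b" "tree_rec k D b = a"
proof -
  obtain L where L: "(\<lambda>n. (tree_rec k D ^^ (2 * n)) 0) \<longlonglongrightarrow> L"
    and L_bounds: "0 < L" "L \<le> x" and cycle: "tree_rec k D (tree_rec k D L) = L"
    by (rule even_iterates_tendsto)
  have "L \<noteq> x"
    using has_uniqueness_iff_even_limit[OF L] L_bounds x(2) assms by simp
  with L_bounds have "L < x" by simp
  then have "x < tree_rec k D L"
    using tree_rec_strict_antimono[of L x] L_bounds x by simp
  moreover have "tree_rec k D L < 1"
    using tree_rec_le_half[of L] L_bounds x(2) by simp
  ultimately show ?thesis
    using that \<open>0 < L\<close> \<open>L < x\<close> cycle by blast
qed

lemma has_uniqueness_if_attracting:
  assumes "(tree_rec k D has_real_derivative Dv) (at x)" and "\<bar>Dv\<bar> < 1"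
  shows "has_uniqueness k D"
proof (rule ccontr)
  assume "\<not> has_uniqueness k D"
  then obtain a b where ab: "0 < a" "a < x" "x < b" "b < 1"
    and cycle: "tree_rec k D a = b" "tree_rec k D b = a"
    by (rule two_cycle_if_not_has_uniqueness)
  have x01: "0 < x" "x < 1"
    using tree_rec_fixpoint_bounds[OF x] by auto
  have "1 \<le> conj_rec_slope (k - 1) (D - 1) (logit x)"
  proof (rule conj_rec_two_cycle_slope_ge_1)
    show "k - 1 \<ge> 1" "D - 1 \<ge> 1"
      using k2 D2 by simp_all
    show "logit a < logit x" "logit x < logit b"
      using ab by (simp_all add: logit_strict_mono)
    show "conj_rec (k - 1) (D - 1) (logit a) = logit b" "conj_rec (k - 1) (D - 1) (logit b) = logit a"
      "conj_rec (k - 1) (D - 1) (logit x) = logit x"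
      using logit_tree_rec[of a] logit_tree_rec[of b] logit_tree_rec[of x] ab x01 cycle x(3)
      by simp_all
  qed
  moreover have "Dv = - conj_rec_slope (k - 1) (D - 1) (logit x)"
    using DERIV_unique[OF assms(1) has_real_derivative_tree_rec_at_fixpoint[OF x01 x(3)]] .
  ultimately show False
    using assms(2) by simp
qed

lemma not_has_uniqueness_if_repelling:
  assumes Dv: "(tree_rec k D has_real_derivative Dv) (at x)" and "1 < \<bar>Dv\<bar>"
  shows "\<not> has_uniqueness k D"
proof
  assume uniqueness: "has_uniqueness k D"
  let ?f = "tree_rec k D" and ?e = "\<lambda>n. (tree_rec k D ^^ (2 * n)) 0"
  obtain L where L: "?e \<longlonglongrightarrow> L" "0 < L" "L \<le> x"
    by (rule even_iterates_tendsto)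
  then have "?e \<longlonglongrightarrow> x"
    using has_uniqueness_iff_even_limit[of L] uniqueness x(2) by simp
  have "(?f has_real_derivative Dv) (at (?f x))"
    using Dv x(3) by simp
  then have "((\<lambda>y. ?f (?f y)) has_real_derivative Dv * Dv) (at x)"
    by (rule DERIV_chain2[OF _ Dv])
  then have "((\<lambda>y. ?f (?f y) - y) has_real_derivative Dv * Dv - 1) (at x)"
    by (rule DERIV_diff[OF _ DERIV_ident])
  moreover have "1 < \<bar>Dv\<bar> * \<bar>Dv\<bar>"
    using assms(2) less_1_mult by fastforce
  then have "0 < Dv * Dv - 1"
    by (simp add: abs_mult[symmetric])
  ultimately obtain \<delta> where "0 < \<delta>"
    and below: "\<And>t. 0 < t \<Longrightarrow> t < \<delta> \<Longrightarrow> ?f (?f (x - t)) - (x - t) < ?f (?f x) - x"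
    using DERIV_pos_inc_left by blast
  obtain n where "\<bar>?e n - x\<bar> < \<delta>"
    using LIMSEQ_D[OF \<open>?e \<longlonglongrightarrow> x\<close> \<open>0 < \<delta>\<close>] by auto
  with even_iterate_less_fixpoint[of n] have "?f (?f (?e n)) < ?e n"
    using below[of "x - ?e n"] x(3) by simp
  then have "?e (Suc n) < ?e n"
    by (simp only: funpow_tree_rec_double_Suc)
  then show False
    using incseq_SucD[OF incseq_even_iterates, of n] by simp
qed
end

end

theorem lemma57:
  fixes k D :: nat and f :: "real \<Rightarrow> real" and x :: real
  assumes "k \<ge> 2" and "D \<ge> 2"
    and "f = (\<lambda>z. (1 - z ^ (k - 1)) ^ (D - 1) / (1 + (1 - z ^ (k - 1)) ^ (D - 1)))"
    and "x \<in> {0..1}" and "f x = x"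
    and "\<forall>y\<in>{0..1}. f y = y \<longrightarrow> y = x"
  shows "(\<bar>deriv f x\<bar> < 1 \<longrightarrow> has_uniqueness k D)
       \<and> (\<bar>deriv f x\<bar> > 1 \<longrightarrow> \<not> has_uniqueness k D)"
proof -
  have f: "f = tree_rec k D"
    using assms(3) by (simp add: tree_rec_def[abs_def])
  have x: "0 \<le> x" "x \<le> 1" "tree_rec k D x = x"
    using assms(4,5) f by auto
  have unique: "\<forall>y\<in>{0..1}. tree_rec k D y = y \<longrightarrow> y = x"
    using assms(6) f by simp
  obtain Dv where Dv: "(tree_rec k D has_real_derivative Dv) (at x)"
    using tree_rec_differentiable[OF x(1,2)] .
  have "deriv f x = Dv"
    unfolding f by (rule DERIV_imp_deriv[OF Dv])
  then show ?thesis
    using has_uniqueness_if_attracting[OF assms(1,2) x unique Dv]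
      not_has_uniqueness_if_repelling[OF assms(1,2) x unique Dv] by simp
qed

end
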